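(* There exist a planar graph $G$ and a signature $\sigma:E(G)\to\{-1,+1\}$ such that the signed graph $(G,\sigma)$ has no $Z_4$-colouring. In particular, not every planar graph is signed $Z_4$-colourable.
   Context: A $Z_4$-colouring of a signed graph $(G,\sigma)$ is a map $f:V(G)\to\mathbb Z_4$ such that $f(x)\ne\sigma(e)f(y)$ in $\mathbb Z_4$ for every edge $e=xy$. $G$ is signed $Z_4$-colourable if $(G,\sigma)$ has a $Z_4$-colouring for every signature $\sigma$. *)

theory Defs
  imports "HOL-Analysis.Analysis" "HOL-Library.Numeral_Type"
begin

definition simple_graph :: "'a set \<Rightarrow> 'a set set \<Rightarrow> bool" where
  "simple_graph V E \<longleftrightarrow> finite V \<and>
     (\<forall>e\<in>E. \<exists>u v. e = {u, v} \<and> u \<noteq> v \<and> u \<in> V \<and> v \<in> V)"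

definition planar_embedding ::
  "'a set \<Rightarrow> 'a set set \<Rightarrow> ('a \<Rightarrow> complex) \<Rightarrow> ('a set \<Rightarrow> real \<Rightarrow> complex) \<Rightarrow> bool" where
  "planar_embedding V E p c \<longleftrightarrow>
     inj_on p V \<and>
     (\<forall>e\<in>E. arc (c e) \<and> {pathstart (c e), pathfinish (c e)} = p ` e \<and>
              path_image (c e) \<inter> p ` V = p ` e) \<and>
     (\<forall>e\<in>E. \<forall>e'\<in>E. e \<noteq> e' \<longrightarrow>
              path_image (c e) \<inter> path_image (c e') \<subseteq> p ` (e \<inter> e'))"

definition planar :: "'a set \<Rightarrow> 'a set set \<Rightarrow> bool" where
  "planar V E \<longleftrightarrow> simple_graph V E \<and> (\<exists>p c. planar_embedding V E p c)"

definition signature :: "'a set set \<Rightarrow> ('a set \<Rightarrow> int) \<Rightarrow> bool" where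
  "signature E \<sigma> \<longleftrightarrow> (\<forall>e\<in>E. \<sigma> e = 1 \<or> \<sigma> e = -1)"

text \<open>Z_4-colouring of the signed graph (G, sigma); the type 4 is the ring Z/4Z.\<close>
definition Z4_colouring :: "'a set \<Rightarrow> 'a set set \<Rightarrow> ('a set \<Rightarrow> int) \<Rightarrow> ('a \<Rightarrow> 4) \<Rightarrow> bool" where
  "Z4_colouring V E \<sigma> f \<longleftrightarrow>
     (\<forall>e\<in>E. \<forall>x y. e = {x, y} \<longrightarrow> f x \<noteq> of_int (\<sigma> e) * f y)"

definition signed_Z4_colourable :: "'a set \<Rightarrow> 'a set set \<Rightarrow> bool" where
  "signed_Z4_colourable V E \<longleftrightarrow>
     (\<forall>\<sigma>. signature E \<sigma> \<longrightarrow> (\<exists>f. Z4_colouring V E \<sigma> f))"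

end

theory Submission
  imports Defs
begin

(*
  The graph consists of a planar core and six copies of a ten-vertex signed gadget.  The core is
  K4 on 0, 1, 2, 3 together with a vertex 4 joined to 0, 1, 3 and a vertex 5 joined to 1, 2, 3, all
  edges positive; a Z4-colouring of it is a proper 4-colouring, so 4 and 5 repeat the colours of 2
  and 0.  Whichever two vertices of the K4 carry the odd colours 1 and 3, one of the triangles
  (0,1,4), (1,3,4), (3,0,4), (1,2,5), (2,3,5), (0,2,3) has them on its first two corners and an
  even colour on its third.  A copy of the gadget sits in each of these faces, and the gadget has no
  Z4-colouring giving its three terminals the colours (1,3,even) or (3,1,even).  Both facts are
  finite and are checked by exhaustive search; planarity is checked on an explicit straight-line
  drawing with integer coordinates.
*)

lemma Rep_Abs_bit0_mod_4: "Rep_bit0 (Abs_bit0 (m mod 4) :: 4) = m mod 4"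
  using bit0.Rep_Abs_mod[where 'a = "num1 bit0", of m] by simp

lemma Z4_eq_of_int_mult_iff: "(x::4) = of_int s * y \<longleftrightarrow> Rep_bit0 x = s * Rep_bit0 y mod 4"
  by (simp add: bit0.Rep_inject_sym bit0.of_int_eq bit0.mult_def Rep_Abs_bit0_mod_4 mod_simps)

section \<open>Signed graphs given by edge lists\<close>

type_synonym signed_edge = "nat \<times> nat \<times> int"

definition edges :: "signed_edge list \<Rightarrow> nat set set" where
  "edges es = (\<lambda>(a, b, s). {a, b}) ` set es"

definition signs :: "signed_edge list \<Rightarrow> nat set \<Rightarrow> int" where
  "signs es e = (if e \<in> edges [(a, b, s)\<leftarrow>es. s = -1] then -1 else 1)"

lemma signature_signs: "signature (edges es) (signs es)"
  unfolding signature_def signs_def by simp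

definition simple_signed :: "signed_edge list \<Rightarrow> bool" where
  "simple_signed es \<longleftrightarrow>
     distinct (map (\<lambda>(a, b, s). (a, b)) es) \<and> (\<forall>(a, b, s)\<in>set es. a < b \<and> (s = 1 \<or> s = -1))"

lemma signs_simple:
  assumes "simple_signed es" and e: "(a, b, s) \<in> set es"
  shows "signs es {a, b} = s"
proof -
  have inj: "inj_on (\<lambda>(a, b, s). (a, b)) (set es)"
    and ok: "\<forall>(a, b, s)\<in>set es. a < b \<and> (s = 1 \<or> s = -1)"
    using assms(1) unfolding simple_signed_def by (simp_all add: distinct_map)
  have unique: "s' = s" if e': "(a', b', s') \<in> set es" and "{a', b'} = {a, b}" for a' b' s'
  proof -
    have "a < b" "a' < b'" using bspec[OF ok e] bspec[OF ok e'] by simp_all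
    with \<open>{a', b'} = {a, b}\<close> have "a' = a" "b' = b" by (auto simp: doubleton_eq_iff)
    then show "s' = s" using inj_onD[OF inj _ e' e] by simp
  qed
  have "{a, b} \<in> edges [(a, b, s)\<leftarrow>es. s = -1] \<longleftrightarrow> s = -1"
  proof
    assume "{a, b} \<in> edges [(a, b, s)\<leftarrow>es. s = -1]"
    then obtain a' b' where "(a', b', -1) \<in> set es" "{a', b'} = {a, b}"
      unfolding edges_def by auto
    then show "s = -1" using unique by blast
  next
    assume "s = -1"
    then show "{a, b} \<in> edges [(a, b, s)\<leftarrow>es. s = -1]"
      using e unfolding edges_def by force
  qed
  then show ?thesis
    using bspec[OF ok e] unfolding signs_def by auto
qed

definition Z4_proper :: "signed_edge list \<Rightarrow> (nat \<Rightarrow> int) \<Rightarrow> bool" where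
  "Z4_proper es h \<longleftrightarrow> (\<forall>v. h v \<in> {0..3}) \<and>
     (\<forall>(a, b, s)\<in>set es. h a \<noteq> s * h b mod 4 \<and> h b \<noteq> s * h a mod 4)"

lemma Z4_properI:
  assumes "\<And>v. h v \<in> {0..3}"
    and "\<And>a b s. (a, b, s) \<in> set es \<Longrightarrow> h a \<noteq> s * h b mod 4 \<and> h b \<noteq> s * h a mod 4"
  shows "Z4_proper es h"
  using assms unfolding Z4_proper_def by auto

lemma Z4_properD:
  assumes "Z4_proper es h"
  shows "h v \<in> {0..3}"
    and "(a, b, s) \<in> set es \<Longrightarrow> h a \<noteq> s * h b mod 4 \<and> h b \<noteq> s * h a mod 4"
  using assms unfolding Z4_proper_def by auto

lemma Z4_proper_if_colouring:
  assumes "Z4_colouring V (edges es) (signs es) f" "simple_signed es"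
  shows "Z4_proper es (\<lambda>v. Rep_bit0 (f v))"
proof (rule Z4_properI)
  fix v show "Rep_bit0 (f v) \<in> {0..3}"
    using Rep_bit0[of "f v"] by simp
next
  fix a b s assume e: "(a, b, s) \<in> set es"
  then have "{a, b} \<in> edges es" and sign: "signs es {a, b} = s"
    using signs_simple[OF assms(2)] unfolding edges_def by force+
  with assms(1) have "\<forall>x y. {a, b} = {x, y} \<longrightarrow> f x \<noteq> of_int s * f y"
    unfolding Z4_colouring_def by blast
  then have "f a \<noteq> of_int s * f b" "f b \<noteq> of_int s * f a"
    by (auto simp: insert_commute)
  then show "Rep_bit0 (f a) \<noteq> s * Rep_bit0 (f b) mod 4 \<and> Rep_bit0 (f b) \<noteq> s * Rep_bit0 (f a) mod 4"
    by (simp add: Z4_eq_of_int_mult_iff)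
qed

lemma Z4_proper_mono: "set es' \<subseteq> set es \<Longrightarrow> Z4_proper es h \<Longrightarrow> Z4_proper es' h"
  by (rule Z4_properI) (auto dest: Z4_properD)

text \<open>Endpoints are sorted so that \<open>simple_signed\<close> can be checked on the copies.\<close>

definition copy_edges :: "nat list \<Rightarrow> signed_edge list \<Rightarrow> signed_edge list" where
  "copy_edges m es = map (\<lambda>(i, j, s). (min (m ! i) (m ! j), max (m ! i) (m ! j), s)) es"

lemma Z4_proper_copy_edges:
  assumes "Z4_proper (copy_edges m es) h"
  shows "Z4_proper es (\<lambda>i. h (m ! i))"
proof (rule Z4_properI)
  fix i j s assume "(i, j, s) \<in> set es"
  then have "(min (m ! i) (m ! j), max (m ! i) (m ! j), s) \<in> set (copy_edges m es)"
    unfolding copy_edges_def by force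
  then show "h (m ! i) \<noteq> s * h (m ! j) mod 4 \<and> h (m ! j) \<noteq> s * h (m ! i) mod 4"
    using Z4_properD(2)[OF assms] by (cases "m ! i \<le> m ! j") (auto simp: min_def max_def)
qed (use Z4_properD(1)[OF assms] in blast)

section \<open>Exhaustive colouring search\<close>

definition consistent :: "signed_edge list \<Rightarrow> nat \<Rightarrow> int \<Rightarrow> (nat \<Rightarrow> int option) \<Rightarrow> bool" where
  "consistent es v c asg \<longleftrightarrow> (\<forall>(a, b, s)\<in>set es.
     (a = v \<longrightarrow> (case asg b of None \<Rightarrow> True | Some d \<Rightarrow> c \<noteq> s * d mod 4)) \<and>
     (b = v \<longrightarrow> (case asg a of None \<Rightarrow> True | Some d \<Rightarrow> c \<noteq> s * d mod 4)))"

primrec forall_extensions ::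
  "signed_edge list \<Rightarrow> nat list \<Rightarrow> (nat \<Rightarrow> int option) \<Rightarrow> ((nat \<Rightarrow> int option) \<Rightarrow> bool) \<Rightarrow> bool"
where
  "forall_extensions es [] asg P \<longleftrightarrow> P asg"
| "forall_extensions es (v # vs) asg P \<longleftrightarrow>
     (\<forall>c\<in>set [0..3]. consistent es v c asg \<longrightarrow> forall_extensions es vs (asg(v \<mapsto> c)) P)"

lemma consistent_if_Z4_proper:
  assumes "Z4_proper es h" "asg \<subseteq>\<^sub>m Some \<circ> h"
  shows "consistent es v (h v) asg"
  unfolding consistent_def
proof (intro ballI)
  have agree: "asg w = None \<or> asg w = Some (h w)" for w
    using assms(2) by (auto simp: map_le_def dom_def)
  fix e assume "e \<in> set es"
  moreover obtain a b s where e: "e = (a, b, s)" by (rule prod_cases3)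
  ultimately show "case e of (a, b, s) \<Rightarrow>
      (a = v \<longrightarrow> (case asg b of None \<Rightarrow> True | Some d \<Rightarrow> h v \<noteq> s * d mod 4)) \<and>
      (b = v \<longrightarrow> (case asg a of None \<Rightarrow> True | Some d \<Rightarrow> h v \<noteq> s * d mod 4))"
    using agree[of a] agree[of b] Z4_properD(2)[OF assms(1), of a b s] by auto
qed

lemma forall_extensions_sound:
  assumes "forall_extensions es vs asg P" "Z4_proper es h" "asg \<subseteq>\<^sub>m Some \<circ> h"
  shows "\<exists>asg'. asg' \<subseteq>\<^sub>m Some \<circ> h \<and> P asg'"
  using assms(1,3)
proof (induction vs arbitrary: asg)
  case Nil
  then show ?case by auto
next
  case (Cons v vs)
  have "h v \<in> set [0..3]" "consistent es v (h v) asg"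
    using Z4_properD(1)[OF assms(2)] consistent_if_Z4_proper[OF assms(2) Cons.prems(2)] by simp_all
  then have "forall_extensions es vs (asg(v \<mapsto> h v)) P"
    using Cons.prems(1) by simp
  moreover have "asg(v \<mapsto> h v) \<subseteq>\<^sub>m Some \<circ> h"
    using map_le_upd[OF Cons.prems(2), of v "Some (h v)"] by (simp add: fun_upd_idem o_def)
  ultimately show ?case by (rule Cons.IH)
qed

section \<open>Orientation and segments in the plane\<close>

definition orient :: "complex \<Rightarrow> complex \<Rightarrow> complex \<Rightarrow> real" where
  "orient a b z = Re (b - a) * Im (z - a) - Im (b - a) * Re (z - a)"

lemma orient_affine:
  "orient a b ((1 - u) *\<^sub>R c + u *\<^sub>R d) = (1 - u) * orient a b c + u * orient a b d"
  unfolding orient_def by (simp add: scaleR_conv_of_real algebra_simps)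

lemma orient_swap: "orient b a z = - orient a b z"
  unfolding orient_def by (simp add: algebra_simps)

lemma orient_along: "orient a b (a + t *\<^sub>R (d - a)) = t * orient a b d"
  unfolding orient_def by (simp add: scaleR_conv_of_real algebra_simps)

lemma convex_orient_pos: "convex {z. 0 < orient a b z}"
  unfolding convex_alt
proof (intro ballI allI impI, clarsimp simp: orient_affine)
  fix x y and u :: real
  assume "0 < orient a b x" "0 < orient a b y" "0 \<le> u" "u \<le> 1"
  then show "0 < (1 - u) * orient a b x + u * orient a b y"
    by (cases "u = 0") (auto intro: add_nonneg_pos)
qed

lemma convex_orient_zero: "convex {z. orient a b z = 0}"
  unfolding convex_alt by (simp add: orient_affine)

lemma orient_closed_segment: "z \<in> closed_segment a b \<Longrightarrow> orient a b z = 0"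
  using closed_segment_subset[OF _ _ convex_orient_zero, of a a b b]
  by (auto simp: orient_def)

lemma closed_segment_orient_pos:
  assumes "0 < orient a b c" "0 < orient a b d" "z \<in> closed_segment c d"
  shows "0 < orient a b z"
  using closed_segment_subset[OF _ _ convex_orient_pos, of c a b d] assms by blast

lemma closed_segment_Int_strict_side:
  assumes "0 < orient a b c * orient a b d"
  shows "closed_segment a b \<inter> closed_segment c d = {}"
proof -
  have disjoint: "closed_segment a b \<inter> closed_segment c d = {}"
    if "0 < orient a b c" "0 < orient a b d" for a b
    using closed_segment_orient_pos[OF that] orient_closed_segment[of _ a b]
    by (metis disjoint_iff less_irrefl)
  from assms consider "0 < orient a b c" "0 < orient a b d" | "0 < orient b a c" "0 < orient b a d"
    by (auto simp: zero_less_mult_iff orient_swap[of a b])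
  then show ?thesis
  proof cases
    case 2
    then show ?thesis using disjoint[of b a] by (simp add: closed_segment_commute[of b a])
  qed (rule disjoint)
qed

lemma closed_segment_Int_common_endpoint:
  assumes "orient a b d \<noteq> 0"
  shows "closed_segment a b \<inter> closed_segment a d = {a}"
proof (intro equalityI subsetI)
  fix x assume x: "x \<in> closed_segment a b \<inter> closed_segment a d"
  then obtain t where t: "x = a + t *\<^sub>R (d - a)"
    unfolding closed_segment_def by (auto simp: algebra_simps)
  have "orient a b x = 0"
    using orient_closed_segment x by blast
  then have "t * orient a b d = 0"
    by (simp add: t orient_along)
  then show "x \<in> {a}" using assms t by simp
qed simp

section \<open>Straight-line drawings\<close>

definition point :: "int \<times> int \<Rightarrow> complex" where
  "point P = Complex (of_int (fst P)) (of_int (snd P))"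

definition orient_int :: "int \<times> int \<Rightarrow> int \<times> int \<Rightarrow> int \<times> int \<Rightarrow> int" where
  "orient_int P Q R = (fst Q - fst P) * (snd R - snd P) - (snd Q - snd P) * (fst R - fst P)"

lemma orient_point: "orient (point P) (point Q) (point R) = of_int (orient_int P Q R)"
  unfolding orient_def point_def orient_int_def by simp

lemma inj_point: "inj point"
  by (rule injI) (simp add: point_def complex_eq_iff prod_eq_iff)

type_synonym int_segment = "(int \<times> int) \<times> (int \<times> int)"

definition seg_points :: "int_segment \<Rightarrow> complex set" where
  "seg_points x = closed_segment (point (fst x)) (point (snd x))"

definition seg_ends :: "int_segment \<Rightarrow> complex set" where
  "seg_ends x = {point (fst x), point (snd x)}"

definition meet_at_ends :: "int_segment \<Rightarrow> int_segment \<Rightarrow> bool" where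
  "meet_at_ends x y \<longleftrightarrow> seg_points x \<inter> seg_points y \<subseteq> seg_ends x \<inter> seg_ends y"

lemma meet_at_ends_sym: "meet_at_ends x y \<Longrightarrow> meet_at_ends y x"
  unfolding meet_at_ends_def by blast

lemma meet_at_ends_swap: "meet_at_ends (prod.swap x) y \<longleftrightarrow> meet_at_ends x y"
  unfolding meet_at_ends_def seg_points_def seg_ends_def
  by (simp add: closed_segment_commute[of "point (snd x)"] insert_commute)

lemma meet_at_ends_common_endpoint:
  "orient_int P Q T \<noteq> 0 \<Longrightarrow> meet_at_ends (P, Q) (P, T)"
  unfolding meet_at_ends_def seg_points_def seg_ends_def
  using closed_segment_Int_common_endpoint[of "point P" "point Q" "point T"]
  by (simp add: orient_point)

lemma meet_at_ends_strict_side: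
  "0 < orient_int P Q R * orient_int P Q T \<Longrightarrow> meet_at_ends (P, Q) (R, T)"
  unfolding meet_at_ends_def seg_points_def
  using closed_segment_Int_strict_side[of "point P" "point Q" "point R" "point T"]
  by (simp add: orient_point flip: of_int_mult)

definition separated :: "int_segment \<Rightarrow> int_segment \<Rightarrow> bool" where
  "separated x y \<longleftrightarrow> (case x of (P, Q) \<Rightarrow> case y of (R, T) \<Rightarrow>
     P = R \<and> orient_int P Q T \<noteq> 0 \<or> P = T \<and> orient_int P Q R \<noteq> 0 \<or>
     Q = R \<and> orient_int Q P T \<noteq> 0 \<or> Q = T \<and> orient_int Q P R \<noteq> 0 \<or>
     0 < orient_int P Q R * orient_int P Q T \<or> 0 < orient_int R T P * orient_int R T Q)"

lemma meet_at_ends_if_separated: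
  assumes "separated x y"
  shows "meet_at_ends x y"
proof -
  obtain P Q R T where xy: "x = (P, Q)" "y = (R, T)" by (cases x, cases y) auto
  have swap2: "meet_at_ends x (prod.swap y) \<Longrightarrow> meet_at_ends x y" for x y
    using meet_at_ends_swap meet_at_ends_sym by blast
  show ?thesis
    using assms meet_at_ends_common_endpoint[of P Q T] meet_at_ends_common_endpoint[of P Q R]
      meet_at_ends_common_endpoint[of Q P T] meet_at_ends_common_endpoint[of Q P R]
      meet_at_ends_strict_side[of P Q R T] meet_at_ends_strict_side[of R T P Q]
      meet_at_ends_swap[of "(Q, P)"] swap2[of "(P, Q)" "(R, P)"] swap2[of "(Q, P)" "(R, Q)"]
      meet_at_ends_sym[of "(R, T)" "(P, Q)"]
    unfolding separated_def xy by auto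
qed

definition off_segment :: "int_segment \<Rightarrow> int \<times> int \<Rightarrow> bool" where
  "off_segment x R \<longleftrightarrow> R = fst x \<or> R = snd x \<or> orient_int (fst x) (snd x) R \<noteq> 0"

lemma meet_at_ends_if_off_segment:
  assumes "off_segment x R"
  shows "meet_at_ends x (R, R)"
proof -
  have "point R \<notin> seg_points x" if "orient_int (fst x) (snd x) R \<noteq> 0"
    using that orient_closed_segment[of "point R" "point (fst x)" "point (snd x)"]
    by (auto simp: seg_points_def orient_point)
  then show ?thesis
    using assms unfolding meet_at_ends_def off_segment_def seg_ends_def
    by (auto simp: seg_points_def)
qed

definition right_of :: "int \<times> int \<Rightarrow> int \<times> int \<Rightarrow> int_segment \<Rightarrow> bool" where
  "right_of A B x \<longleftrightarrow> orient_int A B (fst x) < 0 \<and> orient_int A B (snd x) < 0"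

definition left_of :: "int \<times> int \<Rightarrow> int \<times> int \<Rightarrow> int_segment \<Rightarrow> bool" where
  "left_of A B x \<longleftrightarrow> 0 < orient_int A B (fst x) \<and> 0 < orient_int A B (snd x)"

lemma right_of_iff_left_of_swap: "right_of A B x \<longleftrightarrow> left_of B A x"
  unfolding right_of_def left_of_def orient_int_def by (auto simp: algebra_simps)

lemma orient_pos_if_left_of:
  "left_of A B x \<Longrightarrow> z \<in> seg_points x \<Longrightarrow> 0 < orient (point A) (point B) z"
  using closed_segment_orient_pos[of "point A" "point B" "point (fst x)" "point (snd x)" z]
  by (simp add: left_of_def seg_points_def orient_point)

lemma seg_points_disjoint_if_right_left:
  assumes "right_of A B x" "left_of A B y"
  shows "seg_points x \<inter> seg_points y = {}"
  using assms orient_pos_if_left_of[of B A x] orient_pos_if_left_of[of A B y]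
  by (force simp: right_of_iff_left_of_swap orient_swap[of "point B"])

lemma meet_at_ends_by_split:
  assumes "\<not> right_of A B x \<Longrightarrow> \<not> right_of A B y \<Longrightarrow> meet_at_ends x y"
    and "\<not> left_of A B x \<Longrightarrow> \<not> left_of A B y \<Longrightarrow> meet_at_ends x y"
  shows "meet_at_ends x y"
proof -
  have "\<not> (right_of A B z \<and> left_of A B z)" for z
    unfolding right_of_def left_of_def by auto
  then have "right_of A B x \<and> left_of A B y \<or> right_of A B y \<and> left_of A B x"
    if "right_of A B x \<or> right_of A B y" "left_of A B x \<or> left_of A B y"
    using that by blast
  then show ?thesis
    using assms seg_points_disjoint_if_right_left[of A B x y] seg_points_disjoint_if_right_left[of A B y x]
    unfolding meet_at_ends_def by blast
qed

text \<open>A point \<open>R\<close> is treated as the degenerate segment \<open>(R, R)\<close>: then \<open>meet_at_ends x (R, R)\<close>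
  says that the segment \<open>x\<close> passes through \<open>R\<close> only if \<open>R\<close> is one of its endpoints.\<close>

definition crossing_free :: "int_segment list \<Rightarrow> (int \<times> int) list \<Rightarrow> bool" where
  "crossing_free segs pts \<longleftrightarrow>
     (\<forall>x\<in>set segs. \<forall>y\<in>set segs. x \<noteq> y \<longrightarrow> meet_at_ends x y) \<and>
     (\<forall>x\<in>set segs. \<forall>R\<in>set pts. meet_at_ends x (R, R))"

lemma crossing_freeI:
  assumes "\<And>x y. x \<in> set segs \<Longrightarrow> y \<in> set segs \<Longrightarrow> x \<noteq> y \<Longrightarrow> meet_at_ends x y"
    and "\<And>x R. x \<in> set segs \<Longrightarrow> R \<in> set pts \<Longrightarrow> meet_at_ends x (R, R)"
  shows "crossing_free segs pts"
  using assms unfolding crossing_free_def by blast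

lemma crossing_freeD:
  assumes "crossing_free segs pts"
  shows "x \<in> set segs \<Longrightarrow> y \<in> set segs \<Longrightarrow> x \<noteq> y \<Longrightarrow> meet_at_ends x y"
    and "x \<in> set segs \<Longrightarrow> R \<in> set pts \<Longrightarrow> meet_at_ends x (R, R)"
  using assms unfolding crossing_free_def by blast+

text \<open>A binary space partition certifies a drawing without the quadratic test on all pairs:
  a split line \<open>A B\<close> passes to its first subtree everything not strictly right of it and to its
  second subtree everything not strictly left of it.  Objects strictly on opposite sides of a
  line cannot meet, and every other pair ends up together in some leaf.\<close>

datatype bsp = Leaf | Split "int \<times> int" "int \<times> int" bsp bsp

fun bsp_check :: "bsp \<Rightarrow> int_segment list \<Rightarrow> (int \<times> int) list \<Rightarrow> bool" where
  "bsp_check Leaf segs pts \<longleftrightarrow>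
     sorted_wrt separated segs \<and> (\<forall>x\<in>set segs. \<forall>R\<in>set pts. off_segment x R)"
| "bsp_check (Split A B t u) segs pts \<longleftrightarrow>
     bsp_check t [x\<leftarrow>segs. \<not> right_of A B x] [R\<leftarrow>pts. \<not> right_of A B (R, R)] \<and>
     bsp_check u [x\<leftarrow>segs. \<not> left_of A B x] [R\<leftarrow>pts. \<not> left_of A B (R, R)]"

lemma sorted_wrt_pairs:
  "sorted_wrt P xs \<Longrightarrow> x \<in> set xs \<Longrightarrow> y \<in> set xs \<Longrightarrow> x \<noteq> y \<Longrightarrow> P x y \<or> P y x"
  by (induction xs) auto

lemma crossing_free_if_bsp_check: "bsp_check t segs pts \<Longrightarrow> crossing_free segs pts"
proof (induction t arbitrary: segs pts)
  case Leaf
  then have sep: "sorted_wrt separated segs" and off: "\<forall>x\<in>set segs. \<forall>R\<in>set pts. off_segment x R"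
    by simp_all
  show ?case
  proof (rule crossing_freeI)
    fix x y assume "x \<in> set segs" "y \<in> set segs" "x \<noteq> y"
    then show "meet_at_ends x y"
      using sorted_wrt_pairs[OF sep] meet_at_ends_if_separated meet_at_ends_sym by blast
  next
    fix x R assume "x \<in> set segs" "R \<in> set pts"
    then show "meet_at_ends x (R, R)"
      using off meet_at_ends_if_off_segment by blast
  qed
next
  case (Split A B t u)
  have "bsp_check t [x\<leftarrow>segs. \<not> right_of A B x] [R\<leftarrow>pts. \<not> right_of A B (R, R)]"
    and "bsp_check u [x\<leftarrow>segs. \<not> left_of A B x] [R\<leftarrow>pts. \<not> left_of A B (R, R)]"
    using Split.prems by (simp_all only: bsp_check.simps)
  note not_right = crossing_freeD[OF Split.IH(1)[OF this(1)]]
    and not_left = crossing_freeD[OF Split.IH(2)[OF this(2)]]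
  show ?case
  proof (rule crossing_freeI)
    fix x y assume "x \<in> set segs" "y \<in> set segs" "x \<noteq> y"
    with not_right(1) not_left(1) show "meet_at_ends x y"
      by - (rule meet_at_ends_by_split[of A B]; simp)
  next
    fix x R assume "x \<in> set segs" "R \<in> set pts"
    with not_right(2) not_left(2) show "meet_at_ends x (R, R)"
      by - (rule meet_at_ends_by_split[of A B]; simp)
  qed
qed

lemma planar_straight_line:
  fixes p :: "'a \<Rightarrow> complex" and D :: "('a \<times> 'a) set"
  assumes "finite V"
    and D: "\<And>u v. (u, v) \<in> D \<Longrightarrow> u \<noteq> v \<and> u \<in> V \<and> v \<in> V"
    and inj: "inj_on p V"
    and off: "\<And>u v w. (u, v) \<in> D \<Longrightarrow> w \<in> V \<Longrightarrow> p w \<in> closed_segment (p u) (p v) \<Longrightarrow> w = u \<or> w = v"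
    and meet: "\<And>u v u' v'. (u, v) \<in> D \<Longrightarrow> (u', v') \<in> D \<Longrightarrow> {u, v} \<noteq> {u', v'} \<Longrightarrow>
        closed_segment (p u) (p v) \<inter> closed_segment (p u') (p v') \<subseteq> {p u, p v} \<inter> {p u', p v'}"
  shows "planar V ((\<lambda>(u, v). {u, v}) ` D)"
proof -
  let ?E = "(\<lambda>(u, v). {u, v}) ` D"
  define ends where "ends e = (SOME (u, v). (u, v) \<in> D \<and> e = {u, v})" for e
  define c where "c e = linepath (p (fst (ends e))) (p (snd (ends e)))" for e
  have ends: "(u, v) \<in> D" "e = {u, v}" "c e = linepath (p u) (p v)"
    if "e \<in> ?E" "ends e = (u, v)" for e u v
  proof -
    have "\<exists>d. case d of (u, v) \<Rightarrow> (u, v) \<in> D \<and> e = {u, v}" using that(1) by auto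
    then have "case ends e of (u, v) \<Rightarrow> (u, v) \<in> D \<and> e = {u, v}"
      unfolding ends_def by (rule someI_ex)
    then show "(u, v) \<in> D" "e = {u, v}" "c e = linepath (p u) (p v)"
      using that(2) by (simp_all add: c_def)
  qed
  have image_Int: "p ` ({u, v} \<inter> {u', v'}) = {p u, p v} \<inter> {p u', p v'}"
    if "(u, v) \<in> D" "(u', v') \<in> D" for u v u' v'
    using inj_on_image_Int[OF inj, of "{u, v}" "{u', v'}"] D[OF that(1)] D[OF that(2)] by simp
  have "planar_embedding V ?E p c"
    unfolding planar_embedding_def
  proof (intro conjI ballI impI)
    fix e assume e: "e \<in> ?E"
    obtain u v where "ends e = (u, v)" by fastforce
    note uv = ends[OF e this]
    have "p u \<noteq> p v" using D[OF uv(1)] inj_onD[OF inj, of u v] by auto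
    then show "arc (c e)" by (simp add: uv(3))
    show "{pathstart (c e), pathfinish (c e)} = p ` e" unfolding uv(3) by (simp add: uv(2))
    have "closed_segment (p u) (p v) \<inter> p ` V = p ` {u, v}"
    proof
      show "closed_segment (p u) (p v) \<inter> p ` V \<subseteq> p ` {u, v}"
        using off[OF uv(1)] by blast
      show "p ` {u, v} \<subseteq> closed_segment (p u) (p v) \<inter> p ` V"
        using D[OF uv(1)] by auto
    qed
    then show "path_image (c e) \<inter> p ` V = p ` e" unfolding uv(3) by (simp add: uv(2))
  next
    fix e e' assume e: "e \<in> ?E" and e': "e' \<in> ?E" and "e \<noteq> e'"
    obtain u v u' v' where "ends e = (u, v)" "ends e' = (u', v')" by fastforce
    note uv = ends[OF e this(1)] and uv' = ends[OF e' this(2)]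
    show "path_image (c e) \<inter> path_image (c e') \<subseteq> p ` (e \<inter> e')"
      using meet[OF uv(1) uv'(1)] \<open>e \<noteq> e'\<close> image_Int[OF uv(1) uv'(1)]
      unfolding uv(3) uv'(3) by (simp add: uv(2) uv'(2))
  qed (fact inj)
  moreover have "simple_graph V ?E"
    unfolding simple_graph_def
  proof (intro conjI ballI)
    fix e assume "e \<in> ?E"
    then obtain u v where "(u, v) \<in> D" "e = {u, v}" by auto
    with D show "\<exists>u v. e = {u, v} \<and> u \<noteq> v \<and> u \<in> V \<and> v \<in> V" by blast
  qed fact
  ultimately show ?thesis unfolding planar_def by blast
qed

lemma planar_if_crossing_free:
  assumes cs: "distinct cs"
    and es: "\<forall>(a, b, s)\<in>set es. a \<noteq> b \<and> a < length cs \<and> b < length cs"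
    and free: "crossing_free (map (\<lambda>(a, b, s). (cs ! a, cs ! b)) es) cs"
  shows "planar {..<length cs} (edges es)"
proof -
  let ?D = "(\<lambda>(a, b, s). (a, b)) ` set es"
  let ?p = "\<lambda>v. point (cs ! v)"
  have D: "u \<noteq> v \<and> u \<in> {..<length cs} \<and> v \<in> {..<length cs}" if "(u, v) \<in> ?D" for u v
    using that es by auto
  have seg: "(cs ! u, cs ! v) \<in> set (map (\<lambda>(a, b, s). (cs ! a, cs ! b)) es)" if "(u, v) \<in> ?D" for u v
    using that by force
  have inj: "inj_on ?p {..<length cs}"
    using comp_inj_on[OF inj_on_nth[OF cs] inj_on_subset[OF inj_point subset_UNIV]] by (simp add: o_def)
  have "planar {..<length cs} ((\<lambda>(u, v). {u, v}) ` ?D)"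
  proof (rule planar_straight_line[OF _ D inj])
    fix u v w assume uv: "(u, v) \<in> ?D" and w: "w \<in> {..<length cs}"
      and on: "?p w \<in> closed_segment (?p u) (?p v)"
    have "meet_at_ends (cs ! u, cs ! v) (cs ! w, cs ! w)"
      using crossing_freeD(2)[OF free seg[OF uv]] w by simp
    then have "?p w \<in> {?p u, ?p v}"
      using on unfolding meet_at_ends_def seg_points_def seg_ends_def by auto
    then show "w = u \<or> w = v"
      using inj_onD[OF inj, of w u] inj_onD[OF inj, of w v] D[OF uv] w by auto
  next
    fix u v u' v' assume uv: "(u, v) \<in> ?D" and uv': "(u', v') \<in> ?D" and ne: "{u, v} \<noteq> {u', v'}"
    have "(cs ! u, cs ! v) \<noteq> (cs ! u', cs ! v')"
      using ne D[OF uv] D[OF uv'] cs by (auto simp: nth_eq_iff_index_eq)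
    then have "meet_at_ends (cs ! u, cs ! v) (cs ! u', cs ! v')"
      by (rule crossing_freeD(1)[OF free seg[OF uv] seg[OF uv']])
    then show "closed_segment (?p u) (?p v) \<inter> closed_segment (?p u') (?p v') \<subseteq> {?p u, ?p v} \<inter> {?p u', ?p v'}"
      unfolding meet_at_ends_def seg_points_def seg_ends_def by simp
  qed simp
  moreover have "(\<lambda>(u, v). {u, v}) ` ?D = edges es"
    unfolding edges_def image_image by (simp add: case_prod_beta)
  ultimately show ?thesis by simp
qed

section \<open>The counterexample\<close>

definition core_edges :: "signed_edge list" where
  "core_edges = [(0,1,1), (0,2,1), (0,3,1), (1,2,1), (1,3,1), (2,3,1),
                 (0,4,1), (1,4,1), (3,4,1), (1,5,1), (2,5,1), (3,5,1)]"

definition gadget_edges :: "signed_edge list" where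
  "gadget_edges = [(1,6,1), (2,6,1), (3,9,1), (0,3,1), (0,9,1), (5,9,1), (3,5,1), (2,9,1),
    (3,7,1), (0,7,1), (5,7,-1), (1,8,1), (6,8,1), (1,4,1), (4,8,1), (0,4,1), (6,9,-1),
    (5,6,-1), (4,7,1), (7,8,-1), (5,8,1)]"

definition forbidden_terminal_colours :: "(int \<times> int \<times> int) list" where
  "forbidden_terminal_colours = [(1,3,0), (3,1,0), (1,3,2), (3,1,2)]"

text \<open>The gadget vertices \<open>0, 1, 2\<close> are its terminals; placement \<open>m\<close> maps gadget vertex \<open>i\<close> to
  \<open>m ! i\<close>, so the first three entries are the corners of the face receiving the copy.\<close>

definition gadget_placements :: "nat list list" where
  "gadget_placements = [[0, 1, 4, 6, 7, 8, 9, 10, 11, 12], [1, 3, 4, 13, 14, 15, 16, 17, 18, 19],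
    [3, 0, 4, 20, 21, 22, 23, 24, 25, 26], [1, 2, 5, 27, 28, 29, 30, 31, 32, 33],
    [2, 3, 5, 34, 35, 36, 37, 38, 39, 40], [0, 2, 3, 41, 42, 43, 44, 45, 46, 47]]"

definition counterexample :: "signed_edge list" where
  "counterexample = core_edges @ concat (map (\<lambda>m. copy_edges m gadget_edges) gadget_placements)"

definition drawing :: "(int \<times> int) list" where
  "drawing = [(0,0), (2000,0), (1000,1800), (976,582), (992,194), (1302,902), (562,34), (956,14),
    (846,46), (1134,68), (698,24), (1128,30), (708,68), (1624,148), (1476,272), (1452,224),
    (1246,298), (1578,192), (1346,314), (1462,172), (790,400), (544,296), (680,312), (596,218),
    (700,366), (504,238), (808,342), (1682,508), (1508,862), (1530,764), (1362,1024), (1626,630),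
    (1406,1016), (1576,640), (1050,1406), (1010,1196), (1062,1216), (1096,1008), (1032,1338),
    (1036,1068), (1102,1266), (366,452), (512,838), (534,690), (734,912), (410,590), (638,966),
    (522,528)]"

definition drawing_bsp :: bsp where
  "drawing_bsp = (Split (0,401) (1,401) (Split (977,0) (977,1) (Split (639,0) (639,1)
    (Split (0,591) (1,591) (Split (513,0) (513,1) Leaf (Split (0,691) (1,691) Leaf Leaf)) Leaf)
    (Split (0,583) (1,583) Leaf Leaf)) (Split (1303,0) (1303,1) (Split (0,903) (1,903)
    (Split (1037,0) (1037,1) Leaf (Split (0,1009) (1,1009) Leaf Leaf)) Leaf) (Split (0,765)
    (1,765) Leaf (Split (0,631) (1,631) Leaf Leaf)))) (Split (1135,0) (1135,1) (Split (0,69)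
    (1,69) (Split (701,0) (701,1) (Split (545,0) (545,1) Leaf (Split (0,219) (1,219) Leaf Leaf))
    (Split (0,195) (1,195) Leaf Leaf)) (Split (699,0) (699,1) Leaf (Split (957,0) (957,1)
    (Split (0,15) (1,15) Leaf Leaf) Leaf))) (Split (1463,0) (1463,1) (Split (0,173) (1,173)
    (Split (0,225) (1,225) Leaf Leaf) Leaf) Leaf)))"

lemma gadget_forbids:
  assumes "Z4_proper gadget_edges h"
  shows "(h 0, h 1, h 2) \<notin> set forbidden_terminal_colours"
proof
  let ?asg = "[0 \<mapsto> h 0, 1 \<mapsto> h 1, 2 \<mapsto> h 2]"
  have "\<forall>(a, b, c)\<in>set forbidden_terminal_colours.
      forall_extensions gadget_edges [4, 6, 8, 7, 5, 9, 3] [0 \<mapsto> a, 1 \<mapsto> b, 2 \<mapsto> c] (\<lambda>_. False)"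
    by code_simp
  moreover assume "(h 0, h 1, h 2) \<in> set forbidden_terminal_colours"
  ultimately have "forall_extensions gadget_edges [4, 6, 8, 7, 5, 9, 3] ?asg (\<lambda>_. False)"
    by auto
  moreover have "?asg \<subseteq>\<^sub>m Some \<circ> h"
    by (auto simp: map_le_def)
  ultimately show False
    using forall_extensions_sound[OF _ assms] by blast
qed

lemma core_forces_forbidden:
  assumes "Z4_proper core_edges h"
  shows "\<exists>m\<in>set gadget_placements. (h (m ! 0), h (m ! 1), h (m ! 2)) \<in> set forbidden_terminal_colours"
proof -
  let ?P = "\<lambda>asg. \<exists>m\<in>set gadget_placements. \<exists>(a, b, c)\<in>set forbidden_terminal_colours.
      asg (m ! 0) = Some a \<and> asg (m ! 1) = Some b \<and> asg (m ! 2) = Some c"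
  have "forall_extensions core_edges [0..<6] Map.empty ?P"
    by code_simp
  from forall_extensions_sound[OF this assms map_le_empty]
  obtain asg where agree: "asg \<subseteq>\<^sub>m Some \<circ> h" and "?P asg" by blast
  then obtain m a b c where "m \<in> set gadget_placements" "(a, b, c) \<in> set forbidden_terminal_colours"
    and "asg (m ! 0) = Some a" "asg (m ! 1) = Some b" "asg (m ! 2) = Some c"
    by blast
  moreover have "asg w = Some d \<Longrightarrow> d = h w" for w d
    using agree by (auto simp: map_le_def dom_def)
  ultimately show ?thesis by blast
qed

lemma counterexample_not_Z4_colourable:
  "\<nexists>f. Z4_colouring V (edges counterexample) (signs counterexample) f"
proof
  assume "\<exists>f. Z4_colouring V (edges counterexample) (signs counterexample) f"
  then obtain f where f: "Z4_colouring V (edges counterexample) (signs counterexample) f" ..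
  have "simple_signed counterexample"
    by code_simp
  then have proper: "Z4_proper counterexample (\<lambda>v. Rep_bit0 (f v))"
    by (rule Z4_proper_if_colouring[OF f])
  then have "Z4_proper core_edges (\<lambda>v. Rep_bit0 (f v))"
    by (rule Z4_proper_mono[rotated]) (simp add: counterexample_def)
  then obtain m where m: "m \<in> set gadget_placements"
    and forbidden: "(Rep_bit0 (f (m ! 0)), Rep_bit0 (f (m ! 1)), Rep_bit0 (f (m ! 2)))
                    \<in> set forbidden_terminal_colours"
    using core_forces_forbidden by blast
  have "Z4_proper (copy_edges m gadget_edges) (\<lambda>v. Rep_bit0 (f v))"
    using m by (intro Z4_proper_mono[OF _ proper]) (auto simp: counterexample_def)
  then have "Z4_proper gadget_edges (\<lambda>i. Rep_bit0 (f (m ! i)))"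
    by (rule Z4_proper_copy_edges)
  with forbidden show False
    using gadget_forbids by blast
qed

lemma counterexample_planar: "planar {..<length drawing} (edges counterexample)"
proof (rule planar_if_crossing_free)
  show "distinct drawing"
    by code_simp
  show "\<forall>(a, b, s)\<in>set counterexample. a \<noteq> b \<and> a < length drawing \<and> b < length drawing"
    by code_simp
  show "crossing_free (map (\<lambda>(a, b, s). (drawing ! a, drawing ! b)) counterexample) drawing"
    by (rule crossing_free_if_bsp_check[of drawing_bsp]) code_simp
qed

theorem mainTheorem14:
  shows "\<exists>(V :: nat set) E \<sigma>. planar V E \<and> signature E \<sigma> \<and>
           \<not> (\<exists>f. Z4_colouring V E \<sigma> f) \<and> \<not> signed_Z4_colourable V E"
  using counterexample_planar signature_signs counterexample_not_Z4_colourable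
  unfolding signed_Z4_colourable_def by blast

end
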